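(* Fix real numbers $\alpha,\beta,\gamma,\delta$ with $\alpha\neq0$. Let $\mathscr T$ be a graph-enriched Schröder tree on a finite linear order $\ell$ with $|\ell|\ge2$, with root $r$ and $g=\bigvee\mathscr T$. Then, as an identity in $\mathbb C(x)$, $$\Phi_g(x)=\Big(\prod_{w\in\mathrm{Iv}(\mathscr T),\,w\ne r}\Gamma_{g_{\ell_w}}(x-\delta N_{rw})\,\det\big(U_\Gamma(a_w,g_w)(x-\delta N_{rw})\big)\Big)\det\big(U_\Gamma(a_r,g_r)(x)\big).$$
   Context: All graphs finite and simple. For a graph $g$ with $n$ vertices, the universal adjacency matrix is $U(g)=\alpha A(g)+\beta I_n+\gamma J_n+\delta D(g)$, where $A$ is the adjacency matrix, $D$ the diagonal degree matrix, $J_n$ the all-ones matrix. $\Phi_g(x)=\det(xI_n-U(g))$ and $\Gamma_g(x)=\mathbf 1^t(xI_n-U(g))^{-1}\mathbf 1\in\mathbb C(x)$, with $\mathbf 1$ the all-ones vector. Generalized composition: for a segmented partition $\pi=(\ell_1,\dots,\ell_k)$ of $\ell$ (nonempty consecutive segments whose concatenation is $\ell$), graphs $g_{\ell_j}$ on $\ell_j$ and a graph $h$ on $\pi$, $\bigvee_h(g_{\ell_1},\dots,g_{\ell_k})$ has vertex set $\ell$ and edges those of the $g_{\ell_j}$ plus all $\{x,y\}$, $x\in\ell_i,y\in\ell_j$, $\{\ell_i,\ell_j\}\in E(h)$. Graph-enriched Schröder tree on $\ell$: rooted plane tree with leaves the elements of $\ell$ left to right, each internal vertex having at least two children, with a graph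 $g_v$ on $\pi_v=(\ell_{v_1},\dots,\ell_{v_k})$ for each internal $v$ (children $v_1,\dots,v_k$ left to right, $\ell_u$ the leaves below $u$). $\bigvee$ of a leaf is the one-vertex graph and $\bigvee\mathscr T=\bigvee_{g_r}(\bigvee\mathscr T_{r_1},\dots,\bigvee\mathscr T_{r_k})$; $g_{\ell_u}=\bigvee\mathscr T_u$; $a_v=(g_{\ell_{v_1}},\dots,g_{\ell_{v_k}})$. For internal $v$ with $n_i=|\ell_{v_i}|$ and $N_i=\sum_{s:\{\ell_{v_s},\ell_{v_i}\}\in E(g_v)}n_s$: $D_\Gamma(a_v,g_v)(x)=\mathrm{diag}\big(1/\Gamma_{g_{\ell_{v_i}}}(x-\delta N_i)\big)_{i=1}^k$ and $U_\Gamma(a_v,g_v)(x)=-\alpha A(g_v)+\gamma I_k-\gamma J_k+D_\Gamma(a_v,g_v)(x)$ (with $A(g_v)$ indexed by $\pi_v$ in order). For non-root internal $w$ with parent $u$, $N_w=\sum_{x:\{\ell_x,\ell_w\}\in E(g_u)}|\ell_x|$, and $N_{rw}=N_{w_1}+\cdots+N_{w_m}$ along the path $r=w_0,w_1,\dots,w_m=w$. *)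

theory Defs
  imports Complex_Main "Jordan_Normal_Form.Gauss_Jordan_Elimination" "Jordan_Normal_Form.Determinant"
begin

text \<open>Graphs on a finite linear order with n elements are represented on the vertex
  set {0..<n} (natural order) by an edge predicate E; only pairs in {0..<n} matter.\<close>

definition sgraph :: "nat \<Rightarrow> (nat \<Rightarrow> nat \<Rightarrow> bool) \<Rightarrow> bool" where
  "sgraph n E \<longleftrightarrow> (\<forall>i<n. \<forall>j<n. E i j = E j i) \<and> (\<forall>i<n. \<not> E i i)"

definition adjm :: "nat \<Rightarrow> (nat \<Rightarrow> nat \<Rightarrow> bool) \<Rightarrow> complex mat" where
  "adjm n E = mat n n (\<lambda>(i,j). if E i j then 1 else 0)"

definition degree :: "nat \<Rightarrow> (nat \<Rightarrow> nat \<Rightarrow> bool) \<Rightarrow> nat \<Rightarrow> nat" where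
  "degree n E i = card {j. j < n \<and> E i j}"

definition degm :: "nat \<Rightarrow> (nat \<Rightarrow> nat \<Rightarrow> bool) \<Rightarrow> complex mat" where
  "degm n E = mat n n (\<lambda>(i,j). if i = j then of_nat (degree n E i) else 0)"

definition allones :: "nat \<Rightarrow> complex mat" where
  "allones n = mat n n (\<lambda>_. 1)"

definition onesv :: "nat \<Rightarrow> complex vec" where
  "onesv n = vec n (\<lambda>_. 1)"

definition Umat :: "real \<Rightarrow> real \<Rightarrow> real \<Rightarrow> real \<Rightarrow> nat \<Rightarrow> (nat \<Rightarrow> nat \<Rightarrow> bool) \<Rightarrow> complex mat" where
  "Umat \<alpha> \<beta> \<gamma> \<delta> n E =
     complex_of_real \<alpha> \<cdot>\<^sub>m adjm n E + complex_of_real \<beta> \<cdot>\<^sub>m 1\<^sub>m n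
     + complex_of_real \<gamma> \<cdot>\<^sub>m allones n + complex_of_real \<delta> \<cdot>\<^sub>m degm n E"

definition Phi :: "real \<Rightarrow> real \<Rightarrow> real \<Rightarrow> real \<Rightarrow> nat \<Rightarrow> (nat \<Rightarrow> nat \<Rightarrow> bool) \<Rightarrow> complex \<Rightarrow> complex" where
  "Phi \<alpha> \<beta> \<gamma> \<delta> n E x = det (x \<cdot>\<^sub>m 1\<^sub>m n - Umat \<alpha> \<beta> \<gamma> \<delta> n E)"

text \<open>Pointwise value of Gamma_g(x) = 1^t (xI - U)^{-1} 1 (set to 0 where xI - U is singular).\<close>
definition Gamma :: "real \<Rightarrow> real \<Rightarrow> real \<Rightarrow> real \<Rightarrow> nat \<Rightarrow> (nat \<Rightarrow> nat \<Rightarrow> bool) \<Rightarrow> complex \<Rightarrow> complex" where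
  "Gamma \<alpha> \<beta> \<gamma> \<delta> n E x =
     (case mat_inverse (x \<cdot>\<^sub>m 1\<^sub>m n - Umat \<alpha> \<beta> \<gamma> \<delta> n E) of
        Some B \<Rightarrow> onesv n \<bullet> (B *\<^sub>v onesv n)
      | None \<Rightarrow> 0)"

text \<open>Generalized composition of graphs gs = [(n_1,E_1),...,(n_k,E_k)] along h on {0..<k}:
  the j-th graph occupies the consecutive segment of {0..<n_1+...+n_k}.\<close>
definition offs :: "(nat \<times> (nat \<Rightarrow> nat \<Rightarrow> bool)) list \<Rightarrow> nat \<Rightarrow> nat" where
  "offs gs i = sum_list (map fst (take i gs))"

definition compose :: "(nat \<Rightarrow> nat \<Rightarrow> bool) \<Rightarrow> (nat \<times> (nat \<Rightarrow> nat \<Rightarrow> bool)) list \<Rightarrow> nat \<Rightarrow> nat \<Rightarrow> bool" where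
  "compose h gs u v \<longleftrightarrow>
     (\<exists>i<length gs. \<exists>j<length gs.
        offs gs i \<le> u \<and> u < offs gs i + fst (gs!i) \<and>
        offs gs j \<le> v \<and> v < offs gs j + fst (gs!j) \<and>
        (if i = j then snd (gs!i) (u - offs gs i) (v - offs gs i) else h i j))"

text \<open>Graph-enriched Schroeder trees: a node carries the graph on its children (indexed
  0..<k in left-to-right order) and the list of subtrees; leaves are labelled implicitly
  by their left-to-right position, so a tree on l is a tree with |l| leaves on {0..<|l|}.\<close>
datatype stree = Leaf | Node "nat \<Rightarrow> nat \<Rightarrow> bool" "stree list"

fun nleaves :: "stree \<Rightarrow> nat" where
  "nleaves Leaf = 1"
| "nleaves (Node h ts) = sum_list (map nleaves ts)"

fun wf_stree :: "stree \<Rightarrow> bool" where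
  "wf_stree Leaf = True"
| "wf_stree (Node h ts) = (length ts \<ge> 2 \<and> sgraph (length ts) h \<and> (\<forall>t\<in>set ts. wf_stree t))"

fun gr :: "stree \<Rightarrow> nat \<Rightarrow> nat \<Rightarrow> bool" where
  "gr Leaf = (\<lambda>u v. False)"
| "gr (Node h ts) = compose h (map (\<lambda>t. (nleaves t, gr t)) ts)"

text \<open>Vertices of the tree are addressed by paths of child indices from the root.\<close>
fun subtree :: "stree \<Rightarrow> nat list \<Rightarrow> stree" where
  "subtree t [] = t"
| "subtree Leaf (i # p) = Leaf"
| "subtree (Node h ts) (i # p) = subtree (ts ! i) p"

fun valid_path :: "stree \<Rightarrow> nat list \<Rightarrow> bool" where
  "valid_path t [] = True"
| "valid_path Leaf (i # p) = False"
| "valid_path (Node h ts) (i # p) = (i < length ts \<and> valid_path (ts ! i) p)"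

fun is_node :: "stree \<Rightarrow> bool" where
  "is_node Leaf = False"
| "is_node (Node h ts) = True"

definition internal :: "stree \<Rightarrow> nat list set" where
  "internal t = {p. valid_path t p \<and> is_node (subtree t p)}"

fun Nchild :: "stree \<Rightarrow> nat \<Rightarrow> nat" where
  "Nchild Leaf i = 0"
| "Nchild (Node h ts) i = (\<Sum>s<length ts. if h s i then nleaves (ts ! s) else 0)"

fun Npath :: "stree \<Rightarrow> nat list \<Rightarrow> nat" where
  "Npath t [] = 0"
| "Npath Leaf (i # p) = 0"
| "Npath (Node h ts) (i # p) = Nchild (Node h ts) i + Npath (ts ! i) p"

fun UGamma :: "real \<Rightarrow> real \<Rightarrow> real \<Rightarrow> real \<Rightarrow> stree \<Rightarrow> complex \<Rightarrow> complex mat" where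
  "UGamma \<alpha> \<beta> \<gamma> \<delta> Leaf x = 0\<^sub>m 0 0"
| "UGamma \<alpha> \<beta> \<gamma> \<delta> (Node h ts) x =
     - (complex_of_real \<alpha> \<cdot>\<^sub>m adjm (length ts) h) + complex_of_real \<gamma> \<cdot>\<^sub>m 1\<^sub>m (length ts)
     - complex_of_real \<gamma> \<cdot>\<^sub>m allones (length ts)
     + mat (length ts) (length ts) (\<lambda>(i,j). if i = j then
         1 / Gamma \<alpha> \<beta> \<gamma> \<delta> (nleaves (ts ! i)) (gr (ts ! i))
               (x - complex_of_real \<delta> * of_nat (Nchild (Node h ts) i))
         else 0)"

end

(*
  Order the vertices of g by the segments of the children r_1, ..., r_k of the root r. Edges
  between segments only raise degrees inside segment i by N_i, so x I - U(g) is the block diagonal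
  matrix D of the characteristic matrices of the children at x - delta N_i, minus W C W^T, where W
  is the incidence matrix of positions and segments and C = alpha A(g_r) + gamma J - gamma I. The
  matrix determinant lemma gives det (D - W C W^T) = det D * det (I - C W^T D^-1 W), and
  W^T D^-1 W is diagonal with the entries Gamma_i(x - delta N_i). Hence
    Phi_g(x) = prod_i Phi_i(x - delta N_i) Gamma_i(x - delta N_i) * det U_Gamma(a_r, g_r)(x),
  and an induction over the tree, expanding every product Phi_i Gamma_i in the same way, yields
  the theorem, the shifts accumulating along paths to delta N_rw.
  The identity in C(x) is proved for all but finitely many x. Besides the zeros of the Phi_i one
  must avoid those of the Gamma_i: Phi_i Gamma_i agrees with the polynomial
  char(U_i - J) - char(U_i), which is nonzero because Gamma_i(y) does not vanish for large |y|.
*)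
theory Submission
  imports Defs "Jordan_Normal_Form.Char_Poly"
begin

section \<open>Determinant identities\<close>

lemma sylvester_det:
  fixes X Y :: "'a :: idom mat"
  assumes X: "X \<in> carrier_mat n k" and Y: "Y \<in> carrier_mat k n"
  shows "det (1\<^sub>m n + X * Y) = det (1\<^sub>m k + Y * X)"
proof -
  define A where "A = four_block_mat (1\<^sub>m n) X (0\<^sub>m k n) (1\<^sub>m k)"
  define M where "M = four_block_mat (1\<^sub>m n) (-X) Y (1\<^sub>m k)"
  have A: "A \<in> carrier_mat (n+k) (n+k)" unfolding A_def using X by auto
  have M: "M \<in> carrier_mat (n+k) (n+k)" unfolding M_def using X Y by auto
  have AM: "A * M = four_block_mat (1\<^sub>m n + X * Y) (0\<^sub>m n k) Y (1\<^sub>m k)"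
    unfolding A_def M_def
    by (subst mult_four_block_mat[of _ n n _ k _ k _ _ n _ k])
      (use X Y in \<open>auto intro!: cong_four_block_mat eq_matI\<close>)
  have MA: "M * A = four_block_mat (1\<^sub>m n) (0\<^sub>m n k) Y (1\<^sub>m k + Y * X)"
    unfolding A_def M_def
    by (subst mult_four_block_mat[of _ n n _ k _ k _ _ n _ k])
      (use X Y in \<open>auto intro!: cong_four_block_mat eq_matI simp: add.commute\<close>)
  have "det (1\<^sub>m n + X * Y) = det (A * M)"
    unfolding AM by (subst det_four_block_mat_upper_right_zero[of _ n _ k]) (use X Y in auto)
  also have "\<dots> = det (M * A)"
    using det_mult[OF A M] det_mult[OF M A] by (simp add: mult.commute)
  also have "\<dots> = det (1\<^sub>m k + Y * X)"
    unfolding MA by (subst det_four_block_mat_upper_right_zero[of _ n _ k]) (use X Y in auto)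
  finally show ?thesis .
qed

text \<open>The matrix determinant lemma, with \<open>Y\<close> playing the role of \<open>D\<^sup>-\<^sup>1 W\<close>.\<close>

lemma matrix_determinant_lemma:
  fixes D :: "'a :: idom mat"
  assumes D: "D \<in> carrier_mat n n" and Y: "Y \<in> carrier_mat n k" and Q: "Q \<in> carrier_mat k n"
    and DY: "D * Y = W"
  shows "det (D - W * Q) = det D * det (1\<^sub>m k - Q * Y)"
proof -
  have "D - W * Q = D * (1\<^sub>m n + (- Y) * Q)"
  proof -
    have "D * (1\<^sub>m n + (- Y) * Q) = D * 1\<^sub>m n + D * ((- Y) * Q)"
      using D Y Q by (subst mult_add_distrib_mat[of _ n n]) auto
    also have "D * ((- Y) * Q) = - (W * Q)"
      using D Y Q DY by (simp add: assoc_mult_mat[symmetric, of D n n Y k Q n])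
    finally show ?thesis using D Y Q DY by auto
  qed
  then have "det (D - W * Q) = det D * det (1\<^sub>m n + (- Y) * Q)"
    using D Y Q by (simp add: det_mult[of _ n])
  also have "det (1\<^sub>m n + (- Y) * Q) = det (1\<^sub>m k + Q * (- Y))"
    using Y Q by (intro sylvester_det) auto
  also have "1\<^sub>m k + Q * (- Y) = 1\<^sub>m k - Q * Y"
    using Y Q by (intro eq_matI) auto
  finally show ?thesis .
qed

lemma det_one_minus_mult_diag:
  fixes C :: "'a :: field mat"
  assumes C: "C \<in> carrier_mat k k" and g: "\<And>i. i < k \<Longrightarrow> g i \<noteq> 0"
  shows "det (1\<^sub>m k - C * mat k k (\<lambda>(i, j). if i = j then g i else 0))
    = (\<Prod>i<k. g i) * det (mat k k (\<lambda>(i, j). if i = j then 1 / g i else 0) - C)"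
proof -
  define G where "G = mat k k (\<lambda>(i, j). if i = j then g i else 0)"
  define Ginv where "Ginv = mat k k (\<lambda>(i, j). if i = j then 1 / g i else 0)"
  have G: "G \<in> carrier_mat k k" and Ginv: "Ginv \<in> carrier_mat k k"
    unfolding G_def Ginv_def by auto
  have mult_G: "(A * G) $$ (i, j) = A $$ (i, j) * g j"
    if "A \<in> carrier_mat k k" "i < k" "j < k" for A :: "'a mat" and i j
    using that unfolding G_def
    by (simp add: scalar_prod_def atLeast0LessThan if_distrib[of "\<lambda>x. _ * x"] sum.delta'
        cong: if_cong)
  have "1\<^sub>m k - C * G = (Ginv - C) * G"
  proof (rule eq_matI)
    fix i j assume "i < dim_row ((Ginv - C) * G)" "j < dim_col ((Ginv - C) * G)"
    then have i: "i < k" and j: "j < k" using G Ginv C by auto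
    have "((Ginv - C) * G) $$ (i, j) = (Ginv - C) $$ (i, j) * g j"
      using C Ginv i j by (intro mult_G) auto
    also have "\<dots> = (1\<^sub>m k - C * G) $$ (i, j)"
      using C G i j g[OF j] mult_G[OF C i j] by (simp add: Ginv_def algebra_simps)
    finally show "(1\<^sub>m k - C * G) $$ (i, j) = ((Ginv - C) * G) $$ (i, j)" ..
  qed (use C G Ginv in auto)
  moreover have "det G = (\<Prod>i<k. g i)"
  proof -
    have "det G = prod_list (diag_mat G)"
      by (rule det_upper_triangular[OF _ G]) (auto simp: G_def upper_triangular_def)
    also have "\<dots> = (\<Prod>i<k. g i)"
      using G by (simp add: prod_list_diag_prod G_def atLeast0LessThan)
    finally show ?thesis .
  qed
  moreover have "det ((Ginv - C) * G) = det (Ginv - C) * det G"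
    using C G Ginv by (intro det_mult[of _ k]) auto
  ultimately show ?thesis
    unfolding G_def[symmetric] Ginv_def[symmetric] by (simp add: mult.commute)
qed

section \<open>Matrices partitioned into consecutive segments\<close>

fun seg_index :: "nat list \<Rightarrow> nat \<Rightarrow> nat" where
  "seg_index [] u = 0"
| "seg_index (n # ns) u = (if u < n then 0 else Suc (seg_index ns (u - n)))"

definition seg_start :: "nat list \<Rightarrow> nat \<Rightarrow> nat" where
  "seg_start ns i = sum_list (take i ns)"

lemma seg_start_0 [simp]: "seg_start ns 0 = 0"
  by (simp add: seg_start_def)

lemma seg_start_Cons_Suc [simp]: "seg_start (n # ns) (Suc i) = n + seg_start ns i"
  by (simp add: seg_start_def)

lemma seg_index_bounds:
  assumes "u < sum_list ns"
  shows "seg_index ns u < length ns \<and> seg_start ns (seg_index ns u) \<le> u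
    \<and> u < seg_start ns (seg_index ns u) + ns ! seg_index ns u"
  using assms
proof (induction ns arbitrary: u)
  case (Cons n ns)
  show ?case
  proof (cases "u < n")
    case False
    then have "u - n < sum_list ns" using Cons.prems by simp
    from Cons.IH[OF this] False show ?thesis by auto
  qed simp
qed simp

lemma seg_index_seg_start_add:
  "i < length ns \<Longrightarrow> v < ns ! i \<Longrightarrow> seg_index ns (seg_start ns i + v) = i"
  by (induction ns arbitrary: i) (auto simp: nth_Cons split: nat.splits)

lemma seg_index_eqI:
  "i < length ns \<Longrightarrow> seg_start ns i \<le> u \<Longrightarrow> u < seg_start ns i + ns ! i \<Longrightarrow> seg_index ns u = i"
  using seg_index_seg_start_add[of i ns "u - seg_start ns i"] by simp

lemma seg_start_add_le_sum_list: "i < length ns \<Longrightarrow> seg_start ns i + ns ! i \<le> sum_list ns"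
  by (induction ns arbitrary: i) (auto simp: nth_Cons split: nat.splits)

lemma sum_lessThan_sum_list_segments:
  "(\<Sum>u<sum_list ns. f u) = (\<Sum>i<length ns. \<Sum>v<ns ! i. f (seg_start ns i + v))"
proof (induction ns arbitrary: f)
  case (Cons n ns)
  have "(\<Sum>u<sum_list (n # ns). f u) = (\<Sum>u<n. f u) + (\<Sum>u<sum_list ns. f (n + u))"
    by (simp add: sum.atLeastLessThan_shift_bounds lessThan_atLeast0 add.commute[of n]
        sum.atLeastLessThan_concat[symmetric] sum.shift_bounds_nat_ivl[symmetric])
  also have "(\<Sum>u<sum_list ns. f (n + u)) = (\<Sum>i<length ns. \<Sum>v<ns ! i. f (n + (seg_start ns i + v)))"
    using Cons.IH[of "\<lambda>u. f (n + u)"] .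
  finally show ?case
    unfolding length_Cons sum.lessThan_Suc_shift by (simp add: add.assoc)
qed simp

lemma sum_seg_index_eq:
  assumes "i < length ns"
  shows "(\<Sum>u<sum_list ns. if seg_index ns u = i then f u else 0) = (\<Sum>v<ns ! i. f (seg_start ns i + v))"
proof -
  have "(\<Sum>u<sum_list ns. if seg_index ns u = i then f u else 0)
      = (\<Sum>j<length ns. if j = i then (\<Sum>v<ns ! j. f (seg_start ns j + v)) else 0)"
    unfolding sum_lessThan_sum_list_segments
    by (intro sum.cong refl) (auto simp: seg_index_seg_start_add)
  then show ?thesis using assms by simp
qed

lemma square_mat_set_if_nth_carrier:
  assumes "\<And>i. i < length As \<Longrightarrow> As ! i \<in> carrier_mat (ns ! i) (ns ! i)"
  shows "\<forall>A\<in>set As. square_mat A"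
proof
  fix A assume "A \<in> set As"
  then obtain i where "i < length As" "A = As ! i" by (auto simp: in_set_conv_nth)
  then show "square_mat A" using assms[of i] by auto
qed

lemma diag_block_mat_index:
  assumes "\<forall>A\<in>set As. square_mat A"
  defines "ns \<equiv> map dim_row As"
  assumes "u < sum_list ns" "v < sum_list ns"
  shows "diag_block_mat As $$ (u, v) =
    (if seg_index ns u = seg_index ns v
     then As ! seg_index ns u $$ (u - seg_start ns (seg_index ns u), v - seg_start ns (seg_index ns u))
     else 0)"
  using assms(1,3,4) unfolding ns_def
proof (induction As arbitrary: u v)
  case (Cons A As)
  have "dim_col A = dim_row A" and "square_mat (diag_block_mat As)"
    using Cons.prems(1) diag_block_mat_square[of As] by auto
  then show ?case
    using Cons by (auto simp: Let_def dim_diag_block_mat)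
qed simp

lemma det_diag_block_mat:
  fixes As :: "'a :: idom mat list"
  assumes "\<forall>A\<in>set As. square_mat A"
  shows "det (diag_block_mat As) = prod_list (map det As)"
  using assms
proof (induction As)
  case Nil
  have "0\<^sub>m 0 0 = (1\<^sub>m 0 :: 'a mat)" by (rule eq_matI) auto
  then show ?case by simp
next
  case (Cons A As)
  define a where "a = dim_row A"
  define B where "B = diag_block_mat As"
  define m where "m = dim_row B"
  have A: "A \<in> carrier_mat a a" using Cons.prems unfolding a_def by auto
  have B: "B \<in> carrier_mat m m"
    using Cons.prems diag_block_mat_square[of As] unfolding m_def B_def by auto
  have "diag_block_mat (A # As) = four_block_mat A (0\<^sub>m a m) (0\<^sub>m m a) B"
    using A B by (simp add: Let_def B_def)
  also have "det \<dots> = det A * det B"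
    using A B by (intro det_four_block_mat_upper_right_zero) auto
  finally show ?case using Cons by (simp add: B_def)
qed

lemma diag_block_mat_mult:
  assumes "list_all2 (\<lambda>A B. \<exists>n. A \<in> carrier_mat n n \<and> B \<in> carrier_mat n n) As Bs"
  shows "diag_block_mat As * diag_block_mat Bs = diag_block_mat (map2 (*) As Bs)"
  using assms
proof (induction rule: list_all2_induct)
  case Nil
  show ?case by (rule eq_matI) auto
next
  case (Cons A As B Bs)
  obtain a where A: "A \<in> carrier_mat a a" and B: "B \<in> carrier_mat a a"
    using Cons.hyps(1) by blast
  define m where "m = dim_row (diag_block_mat As)"
  have "square_mat (diag_block_mat As) \<and> square_mat (diag_block_mat Bs) \<and>
      dim_row (diag_block_mat Bs) = dim_row (diag_block_mat As)"
    using Cons.hyps(2) by (induction rule: list_all2_induct) (auto simp: Let_def)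
  then have As: "diag_block_mat As \<in> carrier_mat m m" and Bs: "diag_block_mat Bs \<in> carrier_mat m m"
    unfolding m_def by auto
  have "diag_block_mat (A # As) * diag_block_mat (B # Bs)
      = four_block_mat A (0\<^sub>m a m) (0\<^sub>m m a) (diag_block_mat As)
      * four_block_mat B (0\<^sub>m a m) (0\<^sub>m m a) (diag_block_mat Bs)"
    using A B As Bs by (simp add: Let_def)
  also have "\<dots> = four_block_mat (A * B) (0\<^sub>m a m) (0\<^sub>m m a) (diag_block_mat As * diag_block_mat Bs)"
    using A B As Bs by (subst mult_four_block_mat[of _ a a _ m _ m _ _ a _ m]) auto
  also have "\<dots> = diag_block_mat (map2 (*) (A # As) (B # Bs))"
    using A B As Bs by (simp add: Let_def Cons.IH[symmetric])
  finally show ?case .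
qed

definition seg_indicator :: "nat list \<Rightarrow> 'a :: zero_neq_one mat" where
  "seg_indicator ns = mat (sum_list ns) (length ns) (\<lambda>(u, i). if seg_index ns u = i then 1 else 0)"

lemma seg_indicator_carrier:
  "seg_indicator ns \<in> carrier_mat (sum_list ns) (length ns)"
  by (simp add: seg_indicator_def)

lemma dim_seg_indicator [simp]:
  "dim_row (seg_indicator ns) = sum_list ns" "dim_col (seg_indicator ns) = length ns"
  by (simp_all add: seg_indicator_def)

lemma seg_indicator_conj_index:
  fixes C :: "'a :: comm_semiring_1 mat"
  assumes C: "C \<in> carrier_mat (length ns) (length ns)"
    and u: "u < sum_list ns" and v: "v < sum_list ns"
  shows "(seg_indicator ns * C * transpose_mat (seg_indicator ns)) $$ (u, v)
    = C $$ (seg_index ns u, seg_index ns v)"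
proof -
  let ?k = "length ns"
  have row: "(\<Sum>i<?k. (if seg_index ns u = i then 1 else 0) * C $$ (i, j)) = C $$ (seg_index ns u, j)"
    for j
    using seg_index_bounds[OF u] by (simp add: if_distrib[of "\<lambda>x. x * _"] cong: if_cong)
  have "(seg_indicator ns * C * transpose_mat (seg_indicator ns)) $$ (u, v)
      = (\<Sum>j<?k. C $$ (seg_index ns u, j) * (if seg_index ns v = j then 1 else 0))"
    using u v C by (simp add: seg_indicator_def scalar_prod_def atLeast0LessThan row)
  also have "\<dots> = C $$ (seg_index ns u, seg_index ns v)"
    using seg_index_bounds[OF v] by (simp add: if_distrib[of "\<lambda>x. _ * x"] cong: if_cong)
  finally show ?thesis .
qed

lemma transpose_seg_indicator_conj_index:
  fixes X :: "'a :: comm_semiring_1 mat"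
  assumes X: "X \<in> carrier_mat (sum_list ns) (sum_list ns)"
    and i: "i < length ns" and j: "j < length ns"
  shows "(transpose_mat (seg_indicator ns) * X * seg_indicator ns) $$ (i, j)
    = (\<Sum>u<ns ! i. \<Sum>v<ns ! j. X $$ (seg_start ns i + u, seg_start ns j + v))"
proof -
  let ?n = "sum_list ns"
  have col: "(\<Sum>u<?n. (if seg_index ns u = i then 1 else 0) * X $$ (u, v))
      = (\<Sum>u<ns ! i. X $$ (seg_start ns i + u, v))" for v
    using sum_seg_index_eq[OF i, of "\<lambda>u. X $$ (u, v)"]
    by (simp add: if_distrib[of "\<lambda>x. x * _"] cong: if_cong)
  have "(transpose_mat (seg_indicator ns) * X * seg_indicator ns) $$ (i, j)
      = (\<Sum>v<?n. if seg_index ns v = j then (\<Sum>u<ns ! i. X $$ (seg_start ns i + u, v)) else 0)"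
    using i j X by (simp add: seg_indicator_def scalar_prod_def atLeast0LessThan col
        if_distrib[of "\<lambda>x. _ * x"] cong: if_cong)
  also have "\<dots> = (\<Sum>v<ns ! j. \<Sum>u<ns ! i. X $$ (seg_start ns i + u, seg_start ns j + v))"
    by (rule sum_seg_index_eq[OF j])
  finally show ?thesis by (simp add: sum.swap[of _ "{..<ns ! j}"])
qed

lemma transpose_seg_indicator_conj_diag_block_mat_index:
  fixes Bs :: "'a :: comm_semiring_1 mat list"
  assumes sq: "\<forall>B\<in>set Bs. square_mat B"
  defines "ns \<equiv> map dim_row Bs"
  assumes i: "i < length Bs" and j: "j < length Bs"
  shows "(transpose_mat (seg_indicator ns) * diag_block_mat Bs * seg_indicator ns) $$ (i, j)
    = (if i = j then (\<Sum>u<ns ! i. \<Sum>v<ns ! i. Bs ! i $$ (u, v)) else 0)"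
proof -
  have lns: "length ns = length Bs" unfolding ns_def by simp
  have DB: "diag_block_mat Bs \<in> carrier_mat (sum_list ns) (sum_list ns)"
    using diag_block_mat_square[OF sq] unfolding ns_def by (auto simp: dim_diag_block_mat)
  have DB_index: "diag_block_mat Bs $$ (seg_start ns i + u, seg_start ns j + v)
      = (if i = j then Bs ! i $$ (u, v) else 0)" if "u < ns ! i" "v < ns ! j" for u v
    using that i j seg_start_add_le_sum_list[of i ns] seg_start_add_le_sum_list[of j ns] lns
    unfolding ns_def
    by (subst diag_block_mat_index[OF sq]) (auto simp: seg_index_seg_start_add)
  have "(transpose_mat (seg_indicator ns) * diag_block_mat Bs * seg_indicator ns) $$ (i, j)
      = (\<Sum>u<ns ! i. \<Sum>v<ns ! j. diag_block_mat Bs $$ (seg_start ns i + u, seg_start ns j + v))"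
    using DB i j lns by (intro transpose_seg_indicator_conj_index) auto
  also have "\<dots> = (\<Sum>u<ns ! i. \<Sum>v<ns ! j. if i = j then Bs ! i $$ (u, v) else 0)"
    by (intro sum.cong refl) (simp add: DB_index)
  finally show ?thesis by (cases "i = j") simp_all
qed

lemma det_diag_block_mat_minus_seg_conj:
  fixes Ms Bs :: "'a :: field mat list" and C :: "'a mat"
  defines "ns \<equiv> map dim_row Ms" and "k \<equiv> length Ms"
  assumes Ms: "\<And>i. i < k \<Longrightarrow> Ms ! i \<in> carrier_mat (ns ! i) (ns ! i)"
    and Bs: "length Bs = k" "\<And>i. i < k \<Longrightarrow> Bs ! i \<in> carrier_mat (ns ! i) (ns ! i)"
    and inv: "\<And>i. i < k \<Longrightarrow> Ms ! i * Bs ! i = 1\<^sub>m (ns ! i)"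
    and C: "C \<in> carrier_mat k k"
    and g: "\<And>i. i < k \<Longrightarrow> g i = (\<Sum>u<ns ! i. \<Sum>v<ns ! i. Bs ! i $$ (u, v))"
    and g_nz: "\<And>i. i < k \<Longrightarrow> g i \<noteq> 0"
  shows "det (diag_block_mat Ms - seg_indicator ns * C * transpose_mat (seg_indicator ns))
    = prod_list (map det Ms) * (\<Prod>i<k. g i)
      * det (mat k k (\<lambda>(i, j). if i = j then 1 / g i else 0) - C)"
proof -
  define n where "n = sum_list ns"
  define W :: "'a mat" where "W = seg_indicator ns"
  define D where "D = diag_block_mat Ms"
  define DB where "DB = diag_block_mat Bs"
  define Y where "Y = DB * W"
  define G where "G = mat k k (\<lambda>(i, j). if i = j then g i else 0)"
  have lns: "length ns = k" unfolding ns_def k_def by simp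
  have sq_Ms: "\<forall>A\<in>set Ms. square_mat A" and sq_Bs: "\<forall>B\<in>set Bs. square_mat B"
    using square_mat_set_if_nth_carrier[of Ms ns] square_mat_set_if_nth_carrier[of Bs ns] Ms Bs
    unfolding k_def by simp_all
  have rows_Bs: "map dim_row Bs = ns"
    using Bs by (intro nth_equalityI) (auto simp: lns)
  have W: "W \<in> carrier_mat n k" unfolding W_def n_def lns[symmetric] by (rule seg_indicator_carrier)
  have D: "D \<in> carrier_mat n n"
    using diag_block_mat_square[OF sq_Ms] unfolding D_def n_def ns_def by (auto simp: dim_diag_block_mat)
  have DB: "DB \<in> carrier_mat n n"
    using diag_block_mat_square[OF sq_Bs] rows_Bs unfolding DB_def n_def by (auto simp: dim_diag_block_mat)
  have Y: "Y \<in> carrier_mat n k" unfolding Y_def using DB W by simp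
  have "map2 (*) Ms Bs = map (\<lambda>A. 1\<^sub>m (dim_row A)) Ms"
    using inv Bs by (intro nth_equalityI) (auto simp: k_def ns_def)
  then have "D * DB = 1\<^sub>m n"
    unfolding D_def DB_def n_def ns_def
    by (subst diag_block_mat_mult) (use Ms Bs in \<open>auto simp: list_all2_conv_all_nth k_def ns_def\<close>)
  then have DY: "D * Y = W"
    unfolding Y_def using D DB W by (simp add: assoc_mult_mat[symmetric, of D n n DB n W k])
  have G: "transpose_mat W * Y = G"
  proof (rule eq_matI)
    fix i j assume "i < dim_row G" "j < dim_col G"
    then have i: "i < k" and j: "j < k" unfolding G_def by auto
    have "(transpose_mat W * Y) $$ (i, j) = (transpose_mat W * DB * W) $$ (i, j)"
      unfolding Y_def using W DB by (simp add: assoc_mult_mat[of _ k n DB n W k])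
    also have "\<dots> = G $$ (i, j)"
      using transpose_seg_indicator_conj_diag_block_mat_index[OF sq_Bs, of i j] i j g[OF i] Bs(1)
      unfolding W_def DB_def rows_Bs G_def by (cases "i = j") simp_all
    finally show "(transpose_mat W * Y) $$ (i, j) = G $$ (i, j)" .
  qed (use W Y in \<open>auto simp: G_def\<close>)
  have "W * C * transpose_mat W = W * (C * transpose_mat W)"
    using W C by (intro assoc_mult_mat) auto
  then have "det (D - W * C * transpose_mat W) = det (D - W * (C * transpose_mat W))"
    by (simp only:)
  also have "\<dots> = det D * det (1\<^sub>m k - C * transpose_mat W * Y)"
    by (rule matrix_determinant_lemma[OF D Y _ DY]) (use C W in auto)
  also have "C * transpose_mat W * Y = C * G"
    unfolding G[symmetric] using C W Y by (intro assoc_mult_mat) auto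
  also have "det (1\<^sub>m k - C * G) = (\<Prod>i<k. g i) * det (mat k k (\<lambda>(i, j). if i = j then 1 / g i else 0) - C)"
    unfolding G_def by (rule det_one_minus_mult_diag[OF C g_nz])
  also have "det D = prod_list (map det Ms)"
    unfolding D_def by (rule det_diag_block_mat[OF sq_Ms])
  finally show ?thesis unfolding D_def W_def by (simp only: mult.assoc)
qed

lemma diag_block_mat_minus_seg_conj_index:
  fixes As :: "'a :: comm_ring_1 mat list"
  assumes sq: "\<forall>A\<in>set As. square_mat A"
  defines "ns \<equiv> map dim_row As"
  assumes C: "C \<in> carrier_mat (length As) (length As)"
    and u: "u < sum_list ns" and v: "v < sum_list ns"
  shows "(diag_block_mat As - seg_indicator ns * C * transpose_mat (seg_indicator ns)) $$ (u, v)
    = (if seg_index ns u = seg_index ns v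
       then As ! seg_index ns u $$ (u - seg_start ns (seg_index ns u), v - seg_start ns (seg_index ns u))
       else 0)
      - C $$ (seg_index ns u, seg_index ns v)"
proof -
  have C': "C \<in> carrier_mat (length ns) (length ns)" using C unfolding ns_def by simp
  have "(diag_block_mat As - seg_indicator ns * C * transpose_mat (seg_indicator ns)) $$ (u, v)
      = diag_block_mat As $$ (u, v) - (seg_indicator ns * C * transpose_mat (seg_indicator ns)) $$ (u, v)"
    using u v by (intro index_minus_mat(1)) simp_all
  then show ?thesis
    unfolding diag_block_mat_index[OF sq u[unfolded ns_def] v[unfolded ns_def], folded ns_def]
      seg_indicator_conj_index[OF C' u v] .
qed

section \<open>The characteristic matrix of a generalized composition\<close>

lemma offs_eq_seg_start: "offs gs i = seg_start (map fst gs) i"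
  by (simp add: offs_def seg_start_def take_map)

lemma compose_iff_seg_index:
  fixes gs :: "(nat \<times> (nat \<Rightarrow> nat \<Rightarrow> bool)) list"
  defines "ns \<equiv> map fst gs"
  assumes u: "u < sum_list ns" and v: "v < sum_list ns"
  shows "compose h gs u v \<longleftrightarrow>
    (if seg_index ns u = seg_index ns v
     then snd (gs ! seg_index ns u) (u - seg_start ns (seg_index ns u)) (v - seg_start ns (seg_index ns u))
     else h (seg_index ns u) (seg_index ns v))"
    (is "_ \<longleftrightarrow> ?R (seg_index ns u) (seg_index ns v)")
proof
  assume "compose h gs u v"
  then obtain i j where i: "i < length ns" "seg_start ns i \<le> u" "u < seg_start ns i + ns ! i"
    and j: "j < length ns" "seg_start ns j \<le> v" "v < seg_start ns j + ns ! j" and "?R i j"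
    unfolding compose_def offs_eq_seg_start ns_def by auto
  moreover have "seg_index ns u = i" "seg_index ns v = j"
    using seg_index_eqI i j by auto
  ultimately show "?R (seg_index ns u) (seg_index ns v)" by (cases "i = j") auto
next
  assume R: "?R (seg_index ns u) (seg_index ns v)"
  have "seg_index ns u < length gs \<and> seg_start ns (seg_index ns u) \<le> u
      \<and> u < seg_start ns (seg_index ns u) + fst (gs ! seg_index ns u)"
    "seg_index ns v < length gs \<and> seg_start ns (seg_index ns v) \<le> v
      \<and> v < seg_start ns (seg_index ns v) + fst (gs ! seg_index ns v)"
    using seg_index_bounds[OF u] seg_index_bounds[OF v] by (auto simp: ns_def)
  with R show "compose h gs u v"
    unfolding compose_def offs_eq_seg_start ns_def[symmetric] by blast
qed

lemma degree_eq_sum: "degree n E u = (\<Sum>v<n. if E u v then 1 else 0)"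
proof -
  have "{v. v < n \<and> E u v} = {v \<in> {..<n}. E u v}" by auto
  then show ?thesis
    unfolding degree_def by (simp add: sum.inter_filter[symmetric])
qed

lemma degree_compose:
  fixes gs :: "(nat \<times> (nat \<Rightarrow> nat \<Rightarrow> bool)) list"
  defines "ns \<equiv> map fst gs"
  assumes "sgraph (length gs) h" and u: "u < sum_list ns"
  shows "degree (sum_list ns) (compose h gs) u =
    degree (ns ! seg_index ns u) (snd (gs ! seg_index ns u)) (u - seg_start ns (seg_index ns u))
    + (\<Sum>s<length gs. if h s (seg_index ns u) then ns ! s else 0)"
proof -
  define b where "b = seg_index ns u"
  have b: "b < length gs" "seg_start ns b \<le> u" "u < seg_start ns b + ns ! b"
    using seg_index_bounds[OF u] unfolding b_def ns_def by auto
  have h: "h b j = h j b" "\<not> h b b" if "j < length gs" for j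
    using assms(2) b(1) that unfolding sgraph_def by auto
  have "degree (sum_list ns) (compose h gs) u
      = (\<Sum>j<length gs. \<Sum>v<ns ! j. if compose h gs u (seg_start ns j + v) then 1 else 0)"
    unfolding degree_eq_sum sum_lessThan_sum_list_segments by (simp add: ns_def)
  also have "\<dots> = (\<Sum>j<length gs. (if j = b then degree (ns ! b) (snd (gs ! b)) (u - seg_start ns b) else 0)
      + (if h j b then ns ! j else 0))"
  proof (intro sum.cong refl)
    fix j assume j: "j \<in> {..<length gs}"
    have "(\<Sum>v<ns ! j. if compose h gs u (seg_start ns j + v) then 1 else 0)
        = (\<Sum>v<ns ! j. if (if b = j then snd (gs ! b) (u - seg_start ns b) v else h b j) then 1 else 0)"
    proof (intro sum.cong refl)
      fix v assume v: "v \<in> {..<ns ! j}"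
      have "seg_index ns (seg_start ns j + v) = j"
        using j v by (intro seg_index_seg_start_add) (auto simp: ns_def)
      moreover have "seg_start ns j + v < sum_list ns"
        using seg_start_add_le_sum_list[of j ns] j v by (auto simp: ns_def)
      ultimately show "(if compose h gs u (seg_start ns j + v) then 1 else 0) =
          (if (if b = j then snd (gs ! b) (u - seg_start ns b) v else h b j) then 1 else 0)"
        using compose_iff_seg_index[OF u[unfolded ns_def]] unfolding ns_def[symmetric] b_def by auto
    qed
    also have "\<dots> = (if j = b then degree (ns ! b) (snd (gs ! b)) (u - seg_start ns b) else 0)
        + (if h j b then ns ! j else 0)"
      using j h[of j] by (auto simp: degree_eq_sum)
    finally show "(\<Sum>v<ns ! j. if compose h gs u (seg_start ns j + v) then 1 else 0) = \<dots>" .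
  qed
  also have "\<dots> = degree (ns ! b) (snd (gs ! b)) (u - seg_start ns b)
      + (\<Sum>s<length gs. if h s b then ns ! s else 0)"
    using b(1) by (simp add: sum.distrib)
  finally show ?thesis unfolding b_def .
qed

lemma Umat_carrier: "Umat \<alpha> \<beta> \<gamma> \<delta> n E \<in> carrier_mat n n"
  unfolding Umat_def adjm_def degm_def allones_def
  by (intro add_carrier_mat smult_carrier_mat mat_carrier one_carrier_mat)

lemma dim_Umat [simp]:
  "dim_row (Umat \<alpha> \<beta> \<gamma> \<delta> n E) = n" "dim_col (Umat \<alpha> \<beta> \<gamma> \<delta> n E) = n"
  using Umat_carrier[of \<alpha> \<beta> \<gamma> \<delta> n E] by (simp_all only: carrier_mat_def mem_Collect_eq)

lemma char_Umat_index:
  assumes "u < n" "v < n"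
  shows "(x \<cdot>\<^sub>m 1\<^sub>m n - Umat \<alpha> \<beta> \<gamma> \<delta> n E) $$ (u, v) =
    (if u = v then x - complex_of_real \<beta> - complex_of_real \<delta> * of_nat (degree n E u) else 0)
    - complex_of_real \<alpha> * (if E u v then 1 else 0) - complex_of_real \<gamma>"
  using assms by (simp add: Umat_def adjm_def degm_def allones_def)

definition coupling_mat :: "real \<Rightarrow> real \<Rightarrow> nat \<Rightarrow> (nat \<Rightarrow> nat \<Rightarrow> bool) \<Rightarrow> complex mat" where
  "coupling_mat \<alpha> \<gamma> k h = complex_of_real \<alpha> \<cdot>\<^sub>m adjm k h + complex_of_real \<gamma> \<cdot>\<^sub>m allones k
    - complex_of_real \<gamma> \<cdot>\<^sub>m 1\<^sub>m k"

lemma coupling_mat_carrier: "coupling_mat \<alpha> \<gamma> k h \<in> carrier_mat k k"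
  unfolding coupling_mat_def adjm_def allones_def carrier_mat_def by simp

lemma coupling_mat_index:
  "i < k \<Longrightarrow> j < k \<Longrightarrow> coupling_mat \<alpha> \<gamma> k h $$ (i, j)
    = complex_of_real \<alpha> * (if h i j then 1 else 0) + (if i = j then 0 else complex_of_real \<gamma>)"
  by (simp add: coupling_mat_def adjm_def allones_def)

lemma char_Umat_compose:
  fixes gs :: "(nat \<times> (nat \<Rightarrow> nat \<Rightarrow> bool)) list" and h :: "nat \<Rightarrow> nat \<Rightarrow> bool"
    and \<alpha> \<beta> \<gamma> \<delta> :: real
  defines "k \<equiv> length gs" and "ns \<equiv> map fst gs"
  defines "N \<equiv> \<lambda>i. \<Sum>s<k. if h s i then ns ! s else 0"
  assumes h: "sgraph k h"
  shows "x \<cdot>\<^sub>m 1\<^sub>m (sum_list ns) - Umat \<alpha> \<beta> \<gamma> \<delta> (sum_list ns) (compose h gs)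
    = diag_block_mat (map (\<lambda>i. (x - complex_of_real \<delta> * of_nat (N i)) \<cdot>\<^sub>m 1\<^sub>m (ns ! i)
          - Umat \<alpha> \<beta> \<gamma> \<delta> (ns ! i) (snd (gs ! i))) [0..<k])
      - seg_indicator ns * coupling_mat \<alpha> \<gamma> k h * transpose_mat (seg_indicator ns)"
    (is "_ = diag_block_mat ?Ms - ?WCW")
proof -
  have lns: "length ns = k" unfolding ns_def k_def by simp
  have rows: "map dim_row ?Ms = ns" and cols: "map dim_col ?Ms = ns"
    by (rule nth_equalityI; simp add: lns)+
  have sq: "\<forall>A\<in>set ?Ms. square_mat A" by simp
  have D: "diag_block_mat ?Ms \<in> carrier_mat (sum_list ns) (sum_list ns)"
    by (rule carrier_matI) (simp_all only: dim_diag_block_mat rows cols)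
  show ?thesis
  proof (rule eq_matI)
    fix u v assume "u < dim_row (diag_block_mat ?Ms - ?WCW)" and "v < dim_col (diag_block_mat ?Ms - ?WCW)"
    then have u: "u < sum_list ns" and v: "v < sum_list ns"
      by (simp_all only: index_minus_mat(2,3) index_mult_mat(2,3) index_transpose_mat(2,3) dim_seg_indicator)
    define b where "b = seg_index ns u"
    define c where "c = seg_index ns v"
    have b: "b < k" "seg_start ns b \<le> u" "u < seg_start ns b + ns ! b"
      and c: "c < k" "seg_start ns c \<le> v" "v < seg_start ns c + ns ! c"
      using seg_index_bounds[OF u] seg_index_bounds[OF v] unfolding b_def c_def lns by auto
    have rhs: "(diag_block_mat ?Ms - ?WCW) $$ (u, v)
        = (if b = c then ?Ms ! b $$ (u - seg_start ns b, v - seg_start ns b) else 0)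
          - coupling_mat \<alpha> \<gamma> k h $$ (b, c)"
      using diag_block_mat_minus_seg_conj_index[OF sq, unfolded rows, of "coupling_mat \<alpha> \<gamma> k h", OF _ u v]
      unfolding b_def c_def by (simp add: coupling_mat_carrier)
    have comp: "compose h gs u v = (if b = c then snd (gs ! b) (u - seg_start ns b) (v - seg_start ns b) else h b c)"
      using compose_iff_seg_index[OF u[unfolded ns_def] v[unfolded ns_def]]
      unfolding ns_def[symmetric] b_def[symmetric] c_def[symmetric] .
    show "(x \<cdot>\<^sub>m 1\<^sub>m (sum_list ns) - Umat \<alpha> \<beta> \<gamma> \<delta> (sum_list ns) (compose h gs)) $$ (u, v)
        = (diag_block_mat ?Ms - ?WCW) $$ (u, v)"
    proof (cases "b = c")
      case True
      have "\<not> h b b" using h b(1) unfolding sgraph_def by blast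
      have deg: "degree (sum_list ns) (compose h gs) u = degree (ns ! b) (snd (gs ! b)) (u - seg_start ns b) + N b"
        using degree_compose[OF h[unfolded k_def] u[unfolded ns_def]]
        unfolding ns_def[symmetric] b_def[symmetric] N_def k_def .
      have uv: "u = v \<longleftrightarrow> u - seg_start ns b = v - seg_start ns b" using b c True by auto
      have "u - seg_start ns b < ns ! b" "v - seg_start ns b < ns ! b" using b c True by auto
      moreover have "?Ms ! b = (x - complex_of_real \<delta> * of_nat (N b)) \<cdot>\<^sub>m 1\<^sub>m (ns ! b)
          - Umat \<alpha> \<beta> \<gamma> \<delta> (ns ! b) (snd (gs ! b))"
        using b(1) by simp
      ultimately have "?Ms ! b $$ (u - seg_start ns b, v - seg_start ns b)
          = (if u = v then x - complex_of_real \<delta> * of_nat (N b) - complex_of_real \<beta>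
               - complex_of_real \<delta> * of_nat (degree (ns ! b) (snd (gs ! b)) (u - seg_start ns b)) else 0)
            - complex_of_real \<alpha> * (if snd (gs ! b) (u - seg_start ns b) (v - seg_start ns b) then 1 else 0)
            - complex_of_real \<gamma>"
        unfolding uv by (simp only: char_Umat_index)
      then show ?thesis
        unfolding rhs char_Umat_index[OF u v] deg comp coupling_mat_index[OF b(1) c(1)]
        using True \<open>\<not> h b b\<close> by (simp add: algebra_simps)
    next
      case False
      then have "u \<noteq> v" unfolding b_def c_def by auto
      then show ?thesis
        unfolding rhs char_Umat_index[OF u v] comp coupling_mat_index[OF b(1) c(1)] using False by simp
    qed
  qed (use D in simp_all)
qed

lemma char_Umat_Node:
  assumes h: "sgraph (length ts) h"
  shows "x \<cdot>\<^sub>m 1\<^sub>m (nleaves (Node h ts)) - Umat \<alpha> \<beta> \<gamma> \<delta> (nleaves (Node h ts)) (gr (Node h ts))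
    = diag_block_mat (map (\<lambda>i. (x - complex_of_real \<delta> * of_nat (Nchild (Node h ts) i)) \<cdot>\<^sub>m 1\<^sub>m (nleaves (ts ! i))
          - Umat \<alpha> \<beta> \<gamma> \<delta> (nleaves (ts ! i)) (gr (ts ! i))) [0..<length ts])
      - seg_indicator (map nleaves ts) * coupling_mat \<alpha> \<gamma> (length ts) h
        * transpose_mat (seg_indicator (map nleaves ts))"
proof -
  define gs where "gs = map (\<lambda>t. (nleaves t, gr t)) ts"
  have fst: "map fst gs = map nleaves ts" and lgs: "length gs = length ts"
    unfolding gs_def by simp_all
  have "Nchild (Node h ts) i = (\<Sum>s<length ts. if h s i then map nleaves ts ! s else 0)" for i
    by (auto intro!: sum.cong)
  then have "map (\<lambda>i. (x - complex_of_real \<delta> * of_nat (Nchild (Node h ts) i)) \<cdot>\<^sub>m 1\<^sub>m (nleaves (ts ! i))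
          - Umat \<alpha> \<beta> \<gamma> \<delta> (nleaves (ts ! i)) (gr (ts ! i))) [0..<length ts]
      = map (\<lambda>i. (x - complex_of_real \<delta> * of_nat (\<Sum>s<length ts. if h s i then map nleaves ts ! s else 0))
          \<cdot>\<^sub>m 1\<^sub>m (map nleaves ts ! i) - Umat \<alpha> \<beta> \<gamma> \<delta> (map nleaves ts ! i) (snd (gs ! i))) [0..<length ts]"
    by (intro map_cong refl) (simp add: gs_def)
  moreover have "nleaves (Node h ts) = sum_list (map nleaves ts)" "gr (Node h ts) = compose h gs"
    unfolding gs_def by simp_all
  ultimately show ?thesis
    by (simp only: char_Umat_compose[of gs h x \<alpha> \<beta> \<gamma> \<delta>, unfolded fst lgs, OF h])
qed

lemma UGamma_Node:
  "UGamma \<alpha> \<beta> \<gamma> \<delta> (Node h ts) x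
    = mat (length ts) (length ts) (\<lambda>(i, j). if i = j
        then 1 / Gamma \<alpha> \<beta> \<gamma> \<delta> (nleaves (ts ! i)) (gr (ts ! i))
          (x - complex_of_real \<delta> * of_nat (Nchild (Node h ts) i))
        else 0)
      - coupling_mat \<alpha> \<gamma> (length ts) h"
  by (rule eq_matI) (auto simp: coupling_mat_def adjm_def allones_def)

lemma ones_scalar_prod_mult_ones:
  "B \<in> carrier_mat n n \<Longrightarrow> onesv n \<bullet> (B *\<^sub>v onesv n) = (\<Sum>u<n. \<Sum>v<n. B $$ (u, v))"
  by (simp add: onesv_def scalar_prod_def atLeast0LessThan)

lemma Phi_nonzero_inverse:
  assumes "Phi \<alpha> \<beta> \<gamma> \<delta> n E x \<noteq> 0"
  obtains B where "B \<in> carrier_mat n n" "(x \<cdot>\<^sub>m 1\<^sub>m n - Umat \<alpha> \<beta> \<gamma> \<delta> n E) * B = 1\<^sub>m n"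
    "Gamma \<alpha> \<beta> \<gamma> \<delta> n E x = onesv n \<bullet> (B *\<^sub>v onesv n)"
proof -
  let ?A = "x \<cdot>\<^sub>m 1\<^sub>m n - Umat \<alpha> \<beta> \<gamma> \<delta> n E"
  have A: "?A \<in> carrier_mat n n" using Umat_carrier by (rule minus_carrier_mat)
  show thesis
  proof (cases "mat_inverse ?A")
    case None
    with mat_inverse(1)[OF A None, of "()"] det_non_zero_imp_unit[OF A _, of "()"] assms
    show ?thesis unfolding Phi_def by blast
  next
    case (Some B)
    then show ?thesis
      using mat_inverse(2)[OF A Some] by (intro that[of B]) (simp_all add: Gamma_def)
  qed
qed

lemma Phi_Node:
  fixes \<alpha> \<beta> \<gamma> \<delta> :: real and ts :: "stree list" and h :: "nat \<Rightarrow> nat \<Rightarrow> bool"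
    and x :: complex
  defines "k \<equiv> length ts"
  defines "y \<equiv> \<lambda>i. x - complex_of_real \<delta> * of_nat (Nchild (Node h ts) i)"
  assumes h: "sgraph k h"
    and Phi_nz: "\<And>i. i < k \<Longrightarrow> Phi \<alpha> \<beta> \<gamma> \<delta> (nleaves (ts ! i)) (gr (ts ! i)) (y i) \<noteq> 0"
    and Gamma_nz: "\<And>i. i < k \<Longrightarrow> Gamma \<alpha> \<beta> \<gamma> \<delta> (nleaves (ts ! i)) (gr (ts ! i)) (y i) \<noteq> 0"
  shows "Phi \<alpha> \<beta> \<gamma> \<delta> (nleaves (Node h ts)) (gr (Node h ts)) x =
    (\<Prod>i<k. Phi \<alpha> \<beta> \<gamma> \<delta> (nleaves (ts ! i)) (gr (ts ! i)) (y i)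
      * Gamma \<alpha> \<beta> \<gamma> \<delta> (nleaves (ts ! i)) (gr (ts ! i)) (y i))
    * det (UGamma \<alpha> \<beta> \<gamma> \<delta> (Node h ts) x)"
proof -
  define ns where "ns = map nleaves ts"
  define Ms where "Ms = map (\<lambda>i. y i \<cdot>\<^sub>m 1\<^sub>m (nleaves (ts ! i)) - Umat \<alpha> \<beta> \<gamma> \<delta> (nleaves (ts ! i)) (gr (ts ! i))) [0..<k]"
  define g where "g = (\<lambda>i. Gamma \<alpha> \<beta> \<gamma> \<delta> (nleaves (ts ! i)) (gr (ts ! i)) (y i))"
  have ns: "\<And>i. i < k \<Longrightarrow> ns ! i = nleaves (ts ! i)" and rows: "map dim_row Ms = ns" and lMs: "length Ms = k"
    by (auto intro!: nth_equalityI simp: ns_def Ms_def k_def)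
  have "\<forall>i\<in>{..<k}. \<exists>B. B \<in> carrier_mat (ns ! i) (ns ! i) \<and> Ms ! i * B = 1\<^sub>m (ns ! i)
      \<and> g i = onesv (ns ! i) \<bullet> (B *\<^sub>v onesv (ns ! i))"
  proof
    fix i assume "i \<in> {..<k}"
    then have i: "i < k" by simp
    obtain B where "B \<in> carrier_mat (nleaves (ts ! i)) (nleaves (ts ! i))"
      "(y i \<cdot>\<^sub>m 1\<^sub>m (nleaves (ts ! i)) - Umat \<alpha> \<beta> \<gamma> \<delta> (nleaves (ts ! i)) (gr (ts ! i))) * B = 1\<^sub>m (nleaves (ts ! i))"
      "g i = onesv (nleaves (ts ! i)) \<bullet> (B *\<^sub>v onesv (nleaves (ts ! i)))"
      unfolding g_def by (rule Phi_nonzero_inverse[OF Phi_nz[OF i]])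
    then show "\<exists>B. B \<in> carrier_mat (ns ! i) (ns ! i) \<and> Ms ! i * B = 1\<^sub>m (ns ! i)
      \<and> g i = onesv (ns ! i) \<bullet> (B *\<^sub>v onesv (ns ! i))"
      using i unfolding ns[OF i] Ms_def by auto
  qed
  from bchoice[OF this] obtain B where B: "\<forall>i\<in>{..<k}. B i \<in> carrier_mat (ns ! i) (ns ! i)
      \<and> Ms ! i * B i = 1\<^sub>m (ns ! i) \<and> g i = onesv (ns ! i) \<bullet> (B i *\<^sub>v onesv (ns ! i))"
    by blast
  have "Phi \<alpha> \<beta> \<gamma> \<delta> (nleaves (Node h ts)) (gr (Node h ts)) x
      = det (diag_block_mat Ms - seg_indicator ns * coupling_mat \<alpha> \<gamma> k h * transpose_mat (seg_indicator ns))"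
    unfolding Phi_def char_Umat_Node[OF h[unfolded k_def]] Ms_def ns_def y_def k_def ..
  also have "\<dots> = prod_list (map det Ms) * (\<Prod>i<k. g i)
      * det (mat k k (\<lambda>(i, j). if i = j then 1 / g i else 0) - coupling_mat \<alpha> \<gamma> k h)"
  proof (rule det_diag_block_mat_minus_seg_conj[where Ms = Ms and Bs = "map B [0..<k]", unfolded rows lMs])
    fix i assume i: "i < k"
    show "Ms ! i \<in> carrier_mat (ns ! i) (ns ! i)"
      using i unfolding Ms_def ns[OF i] by (simp add: minus_carrier_mat[OF Umat_carrier])
    show "map B [0..<k] ! i \<in> carrier_mat (ns ! i) (ns ! i)" "Ms ! i * map B [0..<k] ! i = 1\<^sub>m (ns ! i)"
      using B i by auto
    show "g i = (\<Sum>u<ns ! i. \<Sum>v<ns ! i. map B [0..<k] ! i $$ (u, v))"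
      using B i by (simp add: ones_scalar_prod_mult_ones)
    show "g i \<noteq> 0" using Gamma_nz[OF i] unfolding g_def .
  qed (simp_all add: coupling_mat_carrier)
  also have "prod_list (map det Ms) = (\<Prod>i<k. Phi \<alpha> \<beta> \<gamma> \<delta> (nleaves (ts ! i)) (gr (ts ! i)) (y i))"
    unfolding Ms_def by (simp add: prod.list_conv_set_nth Phi_def atLeast0LessThan)
  also have "mat k k (\<lambda>(i, j). if i = j then 1 / g i else 0) - coupling_mat \<alpha> \<gamma> k h
      = UGamma \<alpha> \<beta> \<gamma> \<delta> (Node h ts) x"
    unfolding UGamma_Node g_def y_def k_def ..
  finally show ?thesis unfolding g_def by (simp add: prod.distrib mult.assoc)
qed

section \<open>Generic nonvanishing of \<open>Phi\<close> and \<open>Gamma\<close>\<close>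

lemma det_add_allones:
  fixes M B :: "complex mat"
  assumes M: "M \<in> carrier_mat n n" and B: "B \<in> carrier_mat n n" and inv: "M * B = 1\<^sub>m n"
  shows "det (M + allones n) = det M * (1 + onesv n \<bullet> (B *\<^sub>v onesv n))"
proof -
  define Col where "Col = mat n 1 (\<lambda>_. 1 :: complex)"
  define Row where "Row = mat 1 n (\<lambda>_. 1 :: complex)"
  have Col: "Col \<in> carrier_mat n 1" and Row: "- Row \<in> carrier_mat 1 n"
    unfolding Col_def Row_def by auto
  have BCol: "B * Col \<in> carrier_mat n 1" using B Col by simp
  have "M * (B * Col) = Col"
    using M B Col inv by (simp add: assoc_mult_mat[symmetric, of M n n B n Col 1])
  have J: "M + allones n = M - Col * (- Row)"
    using M by (intro eq_matI) (auto simp: allones_def Col_def Row_def scalar_prod_def)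
  have "det (M + allones n) = det M * det (1\<^sub>m 1 - (- Row) * (B * Col))"
    unfolding J using matrix_determinant_lemma[OF M BCol Row] \<open>M * (B * Col) = Col\<close> by blast
  also have "det (1\<^sub>m 1 - (- Row) * (B * Col)) = (1\<^sub>m 1 - (- Row) * (B * Col)) $$ (0, 0)"
    using BCol Row by (intro det_single minus_carrier_mat) auto
  also have "\<dots> = 1 + (\<Sum>u<n. \<Sum>v<n. B $$ (u, v))"
  proof -
    have "(B * Col) $$ (u, 0) = (\<Sum>v<n. B $$ (u, v))" if "u < n" for u
      using B that by (simp add: Col_def scalar_prod_def atLeast0LessThan)
    then have "((- Row) * (B * Col)) $$ (0, 0) = - (\<Sum>u<n. \<Sum>v<n. B $$ (u, v))"
      using carrier_matD[OF BCol] by (simp add: Row_def scalar_prod_def atLeast0LessThan)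
    then show ?thesis using carrier_matD[OF BCol] by (simp add: Row_def)
  qed
  finally show ?thesis using B by (simp only: ones_scalar_prod_mult_ones)
qed

lemma sum_solution_nonzero_if_large_shift:
  fixes U :: "nat \<Rightarrow> nat \<Rightarrow> 'a :: real_normed_field" and v :: "nat \<Rightarrow> 'a"
  assumes n: "n \<ge> 1"
    and eq: "\<And>i. i < n \<Longrightarrow> y * v i - (\<Sum>j<n. U i j * v j) = 1"
    and large: "norm y > 2 * (\<Sum>i<n. \<Sum>j<n. norm (U i j))"
  shows "(\<Sum>i<n. v i) \<noteq> 0"
proof
  \<comment> \<open>With \<open>m\<close> the largest \<open>norm (v i)\<close>, summing all equations gives \<open>n \<le> K m\<close>,
    while the equation at a maximising index gives \<open>(norm y - K) m \<le> 1\<close>.\<close>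
  assume sum_v: "(\<Sum>i<n. v i) = 0"
  define K where "K = (\<Sum>i<n. \<Sum>j<n. norm (U i j))"
  define w where "w i = (\<Sum>j<n. U i j * v j)" for i
  obtain i0 where i0: "i0 < n" and max: "\<And>j. j < n \<Longrightarrow> norm (v j) \<le> norm (v i0)"
  proof -
    let ?S = "(\<lambda>j. norm (v j)) ` {..<n}"
    have fin: "finite ?S" and ne: "?S \<noteq> {}" using n by (auto simp: lessThan_empty_iff)
    from Max_in[OF fin ne] obtain i0 where i0: "i0 \<in> {..<n}" and "Max ?S = norm (v i0)"
      by (rule imageE)
    then have "norm (v j) \<le> norm (v i0)" if "j < n" for j
      using Max_ge[OF fin, of "norm (v j)"] that by simp
    with i0 show thesis using that by simp
  qed
  define m where "m = norm (v i0)"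
  have K: "K \<ge> 0" unfolding K_def by (intro sum_nonneg) auto
  have row_le: "(\<Sum>j<n. norm (U i j)) \<le> K" if "i < n" for i
    unfolding K_def using that by (intro member_le_sum) (auto intro: sum_nonneg)
  have w_le: "norm (w i) \<le> (\<Sum>j<n. norm (U i j)) * m" for i
  proof -
    have "norm (w i) \<le> (\<Sum>j<n. norm (U i j) * norm (v j))"
      unfolding w_def by (rule order_trans[OF norm_sum]) (simp add: norm_mult)
    also have "\<dots> \<le> (\<Sum>j<n. norm (U i j) * m)"
      unfolding m_def by (intro sum_mono mult_left_mono max) auto
    finally show ?thesis by (simp add: sum_distrib_right)
  qed
  have "of_nat n = (\<Sum>i<n. y * v i - w i)" using eq unfolding w_def by simp
  also have "\<dots> = - (\<Sum>i<n. w i)"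
    by (simp add: sum_subtractf sum_distrib_left[symmetric] sum_v)
  finally have "real n \<le> (\<Sum>i<n. norm (w i))"
    by (metis norm_minus_cancel norm_of_nat norm_sum)
  also have "\<dots> \<le> (\<Sum>i<n. (\<Sum>j<n. norm (U i j)) * m)" by (intro sum_mono w_le)
  also have "\<dots> = K * m" unfolding K_def by (simp add: sum_distrib_right)
  finally have n_le: "real n \<le> K * m" .
  have "y * v i0 = 1 + w i0" using eq[OF i0] unfolding w_def by (simp add: algebra_simps)
  then have "norm y * m = norm (1 + w i0)" unfolding m_def by (metis norm_mult)
  also have "\<dots> \<le> 1 + K * m"
    using norm_triangle_ineq[of 1 "w i0"] w_le[of i0] mult_right_mono[OF row_le[OF i0], of m]
    unfolding m_def by simp
  finally have dm: "(norm y - K) * m \<le> 1" by (simp add: algebra_simps)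
  have d: "K < norm y - K" using large unfolding K_def by simp
  have "(norm y - K) * real n \<le> (norm y - K) * (K * m)"
    using n_le d K by (intro mult_left_mono) auto
  also have "\<dots> = K * ((norm y - K) * m)" by (simp add: algebra_simps)
  also have "\<dots> \<le> K" using mult_left_mono[OF dm K] by simp
  finally have "(norm y - K) * real n \<le> K" .
  moreover have "norm y - K \<le> (norm y - K) * real n"
    using mult_left_mono[of 1 "real n" "norm y - K"] n d K by simp
  ultimately show False using d by linarith
qed

lemma ones_inverse_ones_nonzero_if_large:
  fixes U B :: "complex mat"
  assumes U: "U \<in> carrier_mat n n" and n: "n \<ge> 1" and B: "B \<in> carrier_mat n n"
    and inv: "(y \<cdot>\<^sub>m 1\<^sub>m n - U) * B = 1\<^sub>m n"
    and large: "cmod y > 2 * (\<Sum>i<n. \<Sum>j<n. cmod (U $$ (i, j)))"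
  shows "onesv n \<bullet> (B *\<^sub>v onesv n) \<noteq> 0"
proof -
  define v where "v = B *\<^sub>v onesv n"
  have v: "v \<in> carrier_vec n" unfolding v_def using B by (simp add: onesv_def)
  have "(y \<cdot>\<^sub>m 1\<^sub>m n - U) *\<^sub>v v = onesv n"
    unfolding v_def using B U inv
    by (subst assoc_mult_mat_vec[symmetric, of _ n n B n]) (auto simp: onesv_def)
  then have "y * v $ i - (\<Sum>j<n. U $$ (i, j) * v $ j) = 1" if i: "i < n" for i
  proof -
    have "((y \<cdot>\<^sub>m 1\<^sub>m n - U) *\<^sub>v v) $ i = (\<Sum>j<n. (if i = j then y * v $ j else 0) - U $$ (i, j) * v $ j)"
      using i U v by (auto simp: scalar_prod_def atLeast0LessThan algebra_simps intro!: sum.cong)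
    also have "\<dots> = y * v $ i - (\<Sum>j<n. U $$ (i, j) * v $ j)"
      using i by (simp add: sum_subtractf)
    finally show ?thesis using that \<open>(y \<cdot>\<^sub>m 1\<^sub>m n - U) *\<^sub>v v = onesv n\<close> by (simp add: onesv_def)
  qed
  then have "(\<Sum>i<n. v $ i) \<noteq> 0"
    by (rule sum_solution_nonzero_if_large_shift[OF n _ large])
  then show ?thesis
    using v unfolding v_def[symmetric] by (simp add: onesv_def scalar_prod_def atLeast0LessThan)
qed

lemma poly_char_poly_eq_det:
  fixes A :: "'a :: field mat"
  assumes A: "A \<in> carrier_mat n n"
  shows "poly (char_poly A) y = det (y \<cdot>\<^sub>m 1\<^sub>m n - A)"
proof -
  have "- char_matrix A y = y \<cdot>\<^sub>m 1\<^sub>m n - A"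
    using A by (intro eq_matI) (auto simp: char_matrix_def)
  then show ?thesis using char_poly_matrix[OF A, of y] by simp
qed

lemma eventually_Phi_nonzero: "MOST x. Phi \<alpha> \<beta> \<gamma> \<delta> n E x \<noteq> 0"
proof -
  have "char_poly (Umat \<alpha> \<beta> \<gamma> \<delta> n E) \<noteq> 0"
    using degree_monic_char_poly[OF Umat_carrier, of \<alpha> \<beta> \<gamma> \<delta> n E] by auto
  then show ?thesis
    unfolding MOST_iff_cofinite Phi_def poly_char_poly_eq_det[OF Umat_carrier, symmetric]
    by (simp add: poly_roots_finite)
qed

lemma eventually_Gamma_nonzero:
  assumes n: "n \<ge> 1"
  shows "MOST x. Gamma \<alpha> \<beta> \<gamma> \<delta> n E x \<noteq> 0"
proof -
  let ?U = "Umat \<alpha> \<beta> \<gamma> \<delta> n E"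
  \<comment> \<open>Where \<open>Phi\<close> vanishes, \<open>Gamma\<close> is \<open>0\<close> by definition, so \<open>q\<close> only agrees with
    \<open>Phi * Gamma\<close> away from those finitely many points.\<close>
  define q where "q = char_poly (?U - allones n) - char_poly ?U"
  have UJ: "?U - allones n \<in> carrier_mat n n"
    by (rule minus_carrier_mat) (simp add: allones_def)
  have q: "poly q y = Phi \<alpha> \<beta> \<gamma> \<delta> n E y * Gamma \<alpha> \<beta> \<gamma> \<delta> n E y"
    if nz_y: "Phi \<alpha> \<beta> \<gamma> \<delta> n E y \<noteq> 0" for y
  proof -
    obtain B where B: "B \<in> carrier_mat n n" and inv: "(y \<cdot>\<^sub>m 1\<^sub>m n - ?U) * B = 1\<^sub>m n"
      and Gamma: "Gamma \<alpha> \<beta> \<gamma> \<delta> n E y = onesv n \<bullet> (B *\<^sub>v onesv n)"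
      by (rule Phi_nonzero_inverse[OF nz_y])
    have "y \<cdot>\<^sub>m 1\<^sub>m n - (?U - allones n) = (y \<cdot>\<^sub>m 1\<^sub>m n - ?U) + allones n"
      by (rule eq_matI) (auto simp: allones_def)
    then have "poly (char_poly (?U - allones n)) y = Phi \<alpha> \<beta> \<gamma> \<delta> n E y * (1 + Gamma \<alpha> \<beta> \<gamma> \<delta> n E y)"
      unfolding poly_char_poly_eq_det[OF UJ] Gamma Phi_def
      using det_add_allones[OF minus_carrier_mat[OF Umat_carrier] B inv] by simp
    then show ?thesis
      unfolding q_def Phi_def by (simp add: poly_char_poly_eq_det[OF Umat_carrier] algebra_simps)
  qed
  define K where "K = 2 * (\<Sum>i<n. \<Sum>j<n. cmod (?U $$ (i, j)))"
  have "complex_of_real ` {K<..} \<subseteq> {y. K < cmod y}"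
    using K_def by (auto intro: sum_nonneg)
  moreover have "infinite (complex_of_real ` {K<..})"
    using infinite_Ioi finite_imageD inj_of_real inj_on_subset by blast
  ultimately have "INFM y::complex. K < cmod y"
    unfolding INFM_iff_infinite using infinite_super by blast
  then obtain y0 where large: "K < cmod y0" and nz: "Phi \<alpha> \<beta> \<gamma> \<delta> n E y0 \<noteq> 0"
    using INFM_conjI[OF _ eventually_Phi_nonzero] INFM_EX by blast
  obtain B where B: "B \<in> carrier_mat n n" and inv: "(y0 \<cdot>\<^sub>m 1\<^sub>m n - ?U) * B = 1\<^sub>m n"
    and Gamma: "Gamma \<alpha> \<beta> \<gamma> \<delta> n E y0 = onesv n \<bullet> (B *\<^sub>v onesv n)"
    by (rule Phi_nonzero_inverse[OF nz])
  have "Gamma \<alpha> \<beta> \<gamma> \<delta> n E y0 \<noteq> 0"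
    unfolding Gamma using ones_inverse_ones_nonzero_if_large[OF Umat_carrier n B inv] large
    unfolding K_def by blast
  then have "q \<noteq> 0" using q[OF nz] nz by auto
  then have "MOST y. poly q y \<noteq> 0"
    unfolding MOST_iff_cofinite by (simp add: poly_roots_finite)
  then show ?thesis
    using eventually_Phi_nonzero[of \<alpha> \<beta> \<gamma> \<delta> n E] by eventually_elim (use q in auto)
qed

lemma Phi_Gamma_one_vertex:
  assumes "Phi \<alpha> \<beta> \<gamma> \<delta> 1 E x \<noteq> 0"
  shows "Phi \<alpha> \<beta> \<gamma> \<delta> 1 E x * Gamma \<alpha> \<beta> \<gamma> \<delta> 1 E x = 1"
proof -
  let ?M = "x \<cdot>\<^sub>m 1\<^sub>m 1 - Umat \<alpha> \<beta> \<gamma> \<delta> 1 E"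
  obtain B where B: "B \<in> carrier_mat 1 1" and inv: "?M * B = 1\<^sub>m 1"
    and Gamma: "Gamma \<alpha> \<beta> \<gamma> \<delta> 1 E x = onesv 1 \<bullet> (B *\<^sub>v onesv 1)"
    by (rule Phi_nonzero_inverse[OF assms])
  have M: "?M \<in> carrier_mat 1 1" using Umat_carrier by (rule minus_carrier_mat)
  have "?M $$ (0, 0) * B $$ (0, 0) = 1"
    using arg_cong[OF inv, of "\<lambda>A. A $$ (0, 0)"] M B by (simp add: scalar_prod_def)
  moreover have "Phi \<alpha> \<beta> \<gamma> \<delta> 1 E x = ?M $$ (0, 0)"
    unfolding Phi_def by (rule det_single[OF M])
  moreover have "Gamma \<alpha> \<beta> \<gamma> \<delta> 1 E x = B $$ (0, 0)"
    unfolding Gamma using B by (simp add: scalar_prod_def onesv_def)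
  ultimately show ?thesis by simp
qed

section \<open>Graph-enriched Schroeder trees\<close>

lemma nleaves_ge_1: "wf_stree T \<Longrightarrow> nleaves T \<ge> 1"
proof (induction T)
  case (Node h ts)
  then have "ts ! 0 \<in> set ts" by (auto intro!: nth_mem)
  with Node have "1 \<le> nleaves (ts ! 0)" by simp
  also have "nleaves (ts ! 0) \<le> sum_list (map nleaves ts)"
    using \<open>ts ! 0 \<in> set ts\<close> by (simp add: member_le_sum_list)
  finally show ?case by simp
qed simp

lemma internal_Leaf [simp]: "internal Leaf = {}"
  unfolding internal_def by (auto elim: valid_path.elims)

lemma internal_Node: "internal (Node h ts) = insert [] (\<Union>i<length ts. (#) i ` internal (ts ! i))"
  unfolding set_eq_iff
proof
  fix p
  show "p \<in> internal (Node h ts) \<longleftrightarrow> p \<in> insert [] (\<Union>i<length ts. (#) i ` internal (ts ! i))"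
    by (cases p) (auto simp: internal_def)
qed

lemma finite_internal: "finite (internal T)"
  by (induction T) (simp_all add: internal_Node)

definition vertex_factor :: "real \<Rightarrow> real \<Rightarrow> real \<Rightarrow> real \<Rightarrow> stree \<Rightarrow> nat list \<Rightarrow> complex \<Rightarrow> complex" where
  "vertex_factor \<alpha> \<beta> \<gamma> \<delta> T w x =
     Gamma \<alpha> \<beta> \<gamma> \<delta> (nleaves (subtree T w)) (gr (subtree T w)) (x - complex_of_real \<delta> * of_nat (Npath T w))
     * det (UGamma \<alpha> \<beta> \<gamma> \<delta> (subtree T w) (x - complex_of_real \<delta> * of_nat (Npath T w)))"

lemma vertex_factor_root:
  "vertex_factor \<alpha> \<beta> \<gamma> \<delta> T [] x = Gamma \<alpha> \<beta> \<gamma> \<delta> (nleaves T) (gr T) x * det (UGamma \<alpha> \<beta> \<gamma> \<delta> T x)"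
  by (simp add: vertex_factor_def)

lemma prod_vertex_factor_Node:
  "(\<Prod>w\<in>internal (Node h ts) - {[]}. vertex_factor \<alpha> \<beta> \<gamma> \<delta> (Node h ts) w x) =
   (\<Prod>i<length ts. \<Prod>p\<in>internal (ts ! i).
      vertex_factor \<alpha> \<beta> \<gamma> \<delta> (ts ! i) p (x - complex_of_real \<delta> * of_nat (Nchild (Node h ts) i)))"
proof -
  have "internal (Node h ts) - {[]} = (\<Union>i<length ts. (#) i ` internal (ts ! i))"
    unfolding internal_Node by auto
  then have "(\<Prod>w\<in>internal (Node h ts) - {[]}. vertex_factor \<alpha> \<beta> \<gamma> \<delta> (Node h ts) w x)
      = (\<Prod>i<length ts. \<Prod>w\<in>(#) i ` internal (ts ! i). vertex_factor \<alpha> \<beta> \<gamma> \<delta> (Node h ts) w x)"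
    by (simp only:) (rule prod.UNION_disjoint, auto simp: finite_internal)
  also have "\<dots> = (\<Prod>i<length ts. \<Prod>p\<in>internal (ts ! i). vertex_factor \<alpha> \<beta> \<gamma> \<delta> (Node h ts) (i # p) x)"
    by (rule prod.cong[OF refl]) (simp add: prod.reindex inj_on_def)
  also have "\<dots> = (\<Prod>i<length ts. \<Prod>p\<in>internal (ts ! i).
      vertex_factor \<alpha> \<beta> \<gamma> \<delta> (ts ! i) p (x - complex_of_real \<delta> * of_nat (Nchild (Node h ts) i)))"
    by (intro prod.cong refl) (simp add: vertex_factor_def algebra_simps del: Nchild.simps)
  finally show ?thesis .
qed

lemma eventually_Phi_Node:
  fixes \<alpha> \<beta> \<gamma> \<delta> :: real
  assumes wf: "wf_stree (Node h ts)"
    and children: "\<And>i. i < length ts \<Longrightarrow> MOST x.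
      Phi \<alpha> \<beta> \<gamma> \<delta> (nleaves (ts ! i)) (gr (ts ! i)) x * Gamma \<alpha> \<beta> \<gamma> \<delta> (nleaves (ts ! i)) (gr (ts ! i)) x
      = (\<Prod>w\<in>internal (ts ! i). vertex_factor \<alpha> \<beta> \<gamma> \<delta> (ts ! i) w x)"
  shows "MOST x. Phi \<alpha> \<beta> \<gamma> \<delta> (nleaves (Node h ts)) (gr (Node h ts)) x
    = (\<Prod>w\<in>internal (Node h ts) - {[]}. vertex_factor \<alpha> \<beta> \<gamma> \<delta> (Node h ts) w x)
      * det (UGamma \<alpha> \<beta> \<gamma> \<delta> (Node h ts) x)"
proof -
  let ?k = "length ts"
  let ?Phi = "\<lambda>i. Phi \<alpha> \<beta> \<gamma> \<delta> (nleaves (ts ! i)) (gr (ts ! i))"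
  let ?Gamma = "\<lambda>i. Gamma \<alpha> \<beta> \<gamma> \<delta> (nleaves (ts ! i)) (gr (ts ! i))"
  define y where "y i x = x - complex_of_real \<delta> * of_nat (Nchild (Node h ts) i)" for i x
  have "MOST x. \<forall>i\<in>{..<?k}. ?Phi i (y i x) \<noteq> 0 \<and> ?Gamma i (y i x) \<noteq> 0
    \<and> ?Phi i (y i x) * ?Gamma i (y i x) = (\<Prod>w\<in>internal (ts ! i). vertex_factor \<alpha> \<beta> \<gamma> \<delta> (ts ! i) w (y i x))"
  proof (rule eventually_ball_finite[OF finite_lessThan], intro ballI)
    fix i assume "i \<in> {..<?k}"
    then have i: "i < ?k" by simp
    have "wf_stree (ts ! i)" using wf i by simp
    then have "nleaves (ts ! i) \<ge> 1" by (rule nleaves_ge_1)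
    then have "MOST x. ?Phi i x \<noteq> 0 \<and> ?Gamma i x \<noteq> 0
        \<and> ?Phi i x * ?Gamma i x = (\<Prod>w\<in>internal (ts ! i). vertex_factor \<alpha> \<beta> \<gamma> \<delta> (ts ! i) w x)"
      using eventually_Phi_nonzero eventually_Gamma_nonzero children[OF i] by (simp add: eventually_conj_iff)
    then show "MOST x. ?Phi i (y i x) \<noteq> 0 \<and> ?Gamma i (y i x) \<noteq> 0
        \<and> ?Phi i (y i x) * ?Gamma i (y i x) = (\<Prod>w\<in>internal (ts ! i). vertex_factor \<alpha> \<beta> \<gamma> \<delta> (ts ! i) w (y i x))"
      unfolding y_def by (rule MOST_inj) (auto intro: injI)
  qed
  then show ?thesis
  proof (rule MOST_mono)
    fix x
    assume children_x: "\<forall>i\<in>{..<?k}. ?Phi i (y i x) \<noteq> 0 \<and> ?Gamma i (y i x) \<noteq> 0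
      \<and> ?Phi i (y i x) * ?Gamma i (y i x) = (\<Prod>w\<in>internal (ts ! i). vertex_factor \<alpha> \<beta> \<gamma> \<delta> (ts ! i) w (y i x))"
    have "Phi \<alpha> \<beta> \<gamma> \<delta> (nleaves (Node h ts)) (gr (Node h ts)) x
        = (\<Prod>i<?k. ?Phi i (y i x) * ?Gamma i (y i x)) * det (UGamma \<alpha> \<beta> \<gamma> \<delta> (Node h ts) x)"
      unfolding y_def using wf children_x by (intro Phi_Node) (auto simp: y_def)
    also have "\<dots> = (\<Prod>i<?k. \<Prod>w\<in>internal (ts ! i). vertex_factor \<alpha> \<beta> \<gamma> \<delta> (ts ! i) w (y i x))
        * det (UGamma \<alpha> \<beta> \<gamma> \<delta> (Node h ts) x)"
      using children_x by simp
    also have "\<dots> = (\<Prod>w\<in>internal (Node h ts) - {[]}. vertex_factor \<alpha> \<beta> \<gamma> \<delta> (Node h ts) w x)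
        * det (UGamma \<alpha> \<beta> \<gamma> \<delta> (Node h ts) x)"
      unfolding prod_vertex_factor_Node y_def ..
    finally show "Phi \<alpha> \<beta> \<gamma> \<delta> (nleaves (Node h ts)) (gr (Node h ts)) x
        = (\<Prod>w\<in>internal (Node h ts) - {[]}. vertex_factor \<alpha> \<beta> \<gamma> \<delta> (Node h ts) w x)
          * det (UGamma \<alpha> \<beta> \<gamma> \<delta> (Node h ts) x)" .
  qed
qed

lemma eventually_Phi_Gamma_eq_prod_vertex_factor:
  assumes "wf_stree T"
  shows "MOST x. Phi \<alpha> \<beta> \<gamma> \<delta> (nleaves T) (gr T) x * Gamma \<alpha> \<beta> \<gamma> \<delta> (nleaves T) (gr T) x
    = (\<Prod>w\<in>internal T. vertex_factor \<alpha> \<beta> \<gamma> \<delta> T w x)"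
  using assms
proof (induction T)
  case Leaf
  have "MOST x. Phi \<alpha> \<beta> \<gamma> \<delta> 1 (\<lambda>u v. False) x * Gamma \<alpha> \<beta> \<gamma> \<delta> 1 (\<lambda>u v. False) x = 1"
    using eventually_Phi_nonzero by (rule MOST_mono) (rule Phi_Gamma_one_vertex)
  then show ?case by simp
next
  case (Node h ts)
  have "MOST x. Phi \<alpha> \<beta> \<gamma> \<delta> (nleaves (Node h ts)) (gr (Node h ts)) x
    = (\<Prod>w\<in>internal (Node h ts) - {[]}. vertex_factor \<alpha> \<beta> \<gamma> \<delta> (Node h ts) w x)
      * det (UGamma \<alpha> \<beta> \<gamma> \<delta> (Node h ts) x)"
    using Node by (intro eventually_Phi_Node) auto
  then show ?case
  proof (rule MOST_mono)
    fix x
    assume Phi_x: "Phi \<alpha> \<beta> \<gamma> \<delta> (nleaves (Node h ts)) (gr (Node h ts)) x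
        = (\<Prod>w\<in>internal (Node h ts) - {[]}. vertex_factor \<alpha> \<beta> \<gamma> \<delta> (Node h ts) w x)
          * det (UGamma \<alpha> \<beta> \<gamma> \<delta> (Node h ts) x)"
    have "(\<Prod>w\<in>internal (Node h ts). vertex_factor \<alpha> \<beta> \<gamma> \<delta> (Node h ts) w x)
      = vertex_factor \<alpha> \<beta> \<gamma> \<delta> (Node h ts) [] x
        * (\<Prod>w\<in>internal (Node h ts) - {[]}. vertex_factor \<alpha> \<beta> \<gamma> \<delta> (Node h ts) w x)"
      by (rule prod.remove) (simp_all add: finite_internal internal_Node)
    then show "Phi \<alpha> \<beta> \<gamma> \<delta> (nleaves (Node h ts)) (gr (Node h ts)) x
        * Gamma \<alpha> \<beta> \<gamma> \<delta> (nleaves (Node h ts)) (gr (Node h ts)) x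
        = (\<Prod>w\<in>internal (Node h ts). vertex_factor \<alpha> \<beta> \<gamma> \<delta> (Node h ts) w x)"
      unfolding Phi_x vertex_factor_root by (simp only: mult_ac)
  qed
qed

theorem mainTheorem11:
  fixes \<alpha> \<beta> \<gamma> \<delta> :: real and T :: stree
  assumes "\<alpha> \<noteq> 0"
    and "wf_stree T"
    and "nleaves T \<ge> 2"
  shows "\<forall>\<^sub>F x in cofinite.
    Phi \<alpha> \<beta> \<gamma> \<delta> (nleaves T) (gr T) x =
      (\<Prod>w \<in> internal T - {[]}.
          Gamma \<alpha> \<beta> \<gamma> \<delta> (nleaves (subtree T w)) (gr (subtree T w))
             (x - complex_of_real \<delta> * of_nat (Npath T w))
        * det (UGamma \<alpha> \<beta> \<gamma> \<delta> (subtree T w)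
             (x - complex_of_real \<delta> * of_nat (Npath T w))))
      * det (UGamma \<alpha> \<beta> \<gamma> \<delta> T x)"
proof -
  obtain h ts where T: "T = Node h ts"
    using assms(3) by (cases T) auto
  have "MOST x. Phi \<alpha> \<beta> \<gamma> \<delta> (nleaves T) (gr T) x
      = (\<Prod>w\<in>internal T - {[]}. vertex_factor \<alpha> \<beta> \<gamma> \<delta> T w x) * det (UGamma \<alpha> \<beta> \<gamma> \<delta> T x)"
    using assms(2) unfolding T
    by (intro eventually_Phi_Node eventually_Phi_Gamma_eq_prod_vertex_factor) auto
  then show ?thesis unfolding vertex_factor_def .
qed

end
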